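(* If $G$ is a connected graph and $n\ge 1$ is an integer, then $$\dim(G)\le \dim_{n\ell}(G\odot K_n)\le n(G).$$
   Context: Graphs are finite, simple and connected; $d(u,v)$ is the shortest-path distance and $n(G)$ the number of vertices. A set $X$ of vertices resolves two vertices $u,v$ if some $x\in X$ satisfies $d(u,x)\neq d(v,x)$. $X$ is a resolving set if it resolves every pair of distinct vertices; the metric dimension $\dim(G)$ is the minimum size of a resolving set. $X$ is a nonlocal resolving set if it resolves every pair of distinct non-adjacent vertices; the nonlocal metric dimension $\dim_{n\ell}$ is the minimum size of a nonlocal resolving set. For $V(G)=\{g_1,\dots,g_{n(G)}\}$, the corona product $G\odot H$ is obtained from the disjoint union of $G$ and $n(G)$ copies $H_1,\dots,H_{n(G)}$ of $H$ by joining $g_i$ to every vertex of $H_i$ for each $i$. *)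

theory Defs
  imports Main
begin

definition simple_graph :: "'a set \<Rightarrow> ('a \<Rightarrow> 'a \<Rightarrow> bool) \<Rightarrow> bool" where
  "simple_graph V E \<longleftrightarrow> finite V \<and> (\<forall>x y. E x y \<longrightarrow> x \<in> V \<and> y \<in> V)
     \<and> (\<forall>x y. E x y \<longrightarrow> E y x) \<and> (\<forall>x. \<not> E x x)"

fun gwalk :: "('a \<Rightarrow> 'a \<Rightarrow> bool) \<Rightarrow> 'a list \<Rightarrow> bool" where
  "gwalk E [] = False"
| "gwalk E [x] = True"
| "gwalk E (x # y # xs) = (E x y \<and> gwalk E (y # xs))"

definition connected_graph :: "'a set \<Rightarrow> ('a \<Rightarrow> 'a \<Rightarrow> bool) \<Rightarrow> bool" where
  "connected_graph V E \<longleftrightarrow> V \<noteq> {} \<and>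
     (\<forall>u\<in>V. \<forall>v\<in>V. \<exists>p. gwalk E p \<and> hd p = u \<and> last p = v)"

definition gdist :: "('a \<Rightarrow> 'a \<Rightarrow> bool) \<Rightarrow> 'a \<Rightarrow> 'a \<Rightarrow> nat" where
  "gdist E u v = (LEAST k. \<exists>p. gwalk E p \<and> hd p = u \<and> last p = v \<and> length p = Suc k)"

definition resolves :: "('a \<Rightarrow> 'a \<Rightarrow> bool) \<Rightarrow> 'a set \<Rightarrow> 'a \<Rightarrow> 'a \<Rightarrow> bool" where
  "resolves E X u v \<longleftrightarrow> (\<exists>x\<in>X. gdist E u x \<noteq> gdist E v x)"

definition resolving_set :: "'a set \<Rightarrow> ('a \<Rightarrow> 'a \<Rightarrow> bool) \<Rightarrow> 'a set \<Rightarrow> bool" where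
  "resolving_set V E X \<longleftrightarrow> X \<subseteq> V \<and>
     (\<forall>u\<in>V. \<forall>v\<in>V. u \<noteq> v \<longrightarrow> resolves E X u v)"

definition nonlocal_resolving_set :: "'a set \<Rightarrow> ('a \<Rightarrow> 'a \<Rightarrow> bool) \<Rightarrow> 'a set \<Rightarrow> bool" where
  "nonlocal_resolving_set V E X \<longleftrightarrow> X \<subseteq> V \<and>
     (\<forall>u\<in>V. \<forall>v\<in>V. u \<noteq> v \<and> \<not> E u v \<longrightarrow> resolves E X u v)"

definition metric_dim :: "'a set \<Rightarrow> ('a \<Rightarrow> 'a \<Rightarrow> bool) \<Rightarrow> nat" where
  "metric_dim V E = (LEAST k. \<exists>X. resolving_set V E X \<and> card X = k)"

definition nonlocal_metric_dim :: "'a set \<Rightarrow> ('a \<Rightarrow> 'a \<Rightarrow> bool) \<Rightarrow> nat" where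
  "nonlocal_metric_dim V E = (LEAST k. \<exists>X. nonlocal_resolving_set V E X \<and> card X = k)"

(* corona product G \<odot> H: vertex Inl g is g in G, vertex Inr (g,h) is the copy of h in H_g *)
definition corona_verts :: "'a set \<Rightarrow> 'b set \<Rightarrow> ('a + 'a \<times> 'b) set" where
  "corona_verts VG VH = Inl ` VG \<union> Inr ` (VG \<times> VH)"

fun corona_edges :: "'a set \<Rightarrow> ('a \<Rightarrow> 'a \<Rightarrow> bool) \<Rightarrow> 'b set \<Rightarrow> ('b \<Rightarrow> 'b \<Rightarrow> bool)
    \<Rightarrow> ('a + 'a \<times> 'b) \<Rightarrow> ('a + 'a \<times> 'b) \<Rightarrow> bool" where
  "corona_edges VG EG VH EH (Inl a) (Inl b) = EG a b"
| "corona_edges VG EG VH EH (Inr (g, h)) (Inr (g', h')) = (g = g' \<and> g \<in> VG \<and> EH h h')"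
| "corona_edges VG EG VH EH (Inl g) (Inr (g', h)) = (g = g' \<and> g \<in> VG \<and> h \<in> VH)"
| "corona_edges VG EG VH EH (Inr (g', h)) (Inl g) = (g = g' \<and> g \<in> VG \<and> h \<in> VH)"

definition K_verts :: "nat \<Rightarrow> nat set" where "K_verts n = {0..<n}"
definition K_edges :: "nat \<Rightarrow> nat \<Rightarrow> nat \<Rightarrow> bool" where
  "K_edges n i j \<longleftrightarrow> i \<noteq> j \<and> i < n \<and> j < n"

end

theory Submission
  imports Defs
begin

text \<open>
  Project every vertex of \<open>G \<odot> H\<close> to its base vertex in \<open>G\<close>, recording its depth (\<open>0\<close> for
  vertices of \<open>G\<close>, \<open>1\<close> for vertices of the copies of \<open>H\<close>).  A walk in the corona between
  vertices with different bases projects to a walk of \<open>G\<close>, and each endpoint of positive depth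
  costs one extra step; conversely every walk of \<open>G\<close> lifts with exactly these extra steps.
  Hence for a copy vertex \<open>(g,h)\<close> and any \<open>x\<close> with base different from \<open>g\<close>,
  \<open>d((g,h), x) = d(g, base x) + 1 + depth x\<close>.

  Lower bound: a nonlocal resolving set \<open>X\<close> of \<open>G \<odot> K\<^sub>n\<close> must resolve the non-adjacent
  vertices \<open>(g,0)\<close> and \<open>(g',0)\<close>, and by the distance formula the base of the resolving vertex
  resolves \<open>g\<close> and \<open>g'\<close> in \<open>G\<close>; so the bases of \<open>X\<close> form a resolving set of \<open>G\<close>.
  Upper bound: \<open>V(G)\<close> itself is a nonlocal resolving set of \<open>G \<odot> K\<^sub>n\<close>, since two non-adjacent
  copy vertices lie in different copies \<open>g \<noteq> g'\<close>, and \<open>g'\<close> is at distance \<open>1\<close> from the copy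
  vertex over \<open>g'\<close> but at distance \<open>d(g,g') + 1 \<ge> 2\<close> from the one over \<open>g\<close>.
\<close>

lemma gwalk_not_Nil: "gwalk F p \<Longrightarrow> p \<noteq> []"
  by (cases p) auto

lemma gwalk_Cons_iff: "gwalk F (x # p) \<longleftrightarrow> p = [] \<or> (F x (hd p) \<and> gwalk F p)"
  by (cases p) auto

lemma gwalk_snoc: "gwalk F p \<Longrightarrow> F (last p) y \<Longrightarrow> gwalk F (p @ [y])"
  by (induction p rule: induct_list012) auto

lemma gwalk_map: "(\<And>a b. F a b \<Longrightarrow> F' (f a) (f b)) \<Longrightarrow> gwalk F p \<Longrightarrow> gwalk F' (map f p)"
  by (induction p rule: induct_list012) auto

lemma gdist_less_length:
  assumes "gwalk F p" "hd p = a" "last p = b"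
  shows "gdist F a b < length p"
proof -
  have "p \<noteq> []" using assms(1) by (rule gwalk_not_Nil)
  then have "\<exists>q. gwalk F q \<and> hd q = a \<and> last q = b \<and> length q = Suc (length p - 1)"
    using assms by auto
  then have "gdist F a b \<le> length p - 1"
    unfolding gdist_def by (rule Least_le)
  then show ?thesis using \<open>p \<noteq> []\<close> by (cases p) auto
qed

lemma gdist_shortest_walk:
  assumes "gwalk F p" "hd p = a" "last p = b"
  obtains q where "gwalk F q" "hd q = a" "last q = b" "length q = Suc (gdist F a b)"
proof -
  have "p \<noteq> []" using assms(1) by (rule gwalk_not_Nil)
  then have "\<exists>k q. gwalk F q \<and> hd q = a \<and> last q = b \<and> length q = Suc k"
    using assms by (intro exI[of _ "length p - 1"] exI[of _ p]) auto
  then have "\<exists>q. gwalk F q \<and> hd q = a \<and> last q = b \<and> length q = Suc (gdist F a b)"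
    unfolding gdist_def by (rule LeastI_ex)
  with that show thesis by blast
qed

lemma gdist_self [simp]: "gdist F a a = 0"
  using gdist_less_length[of F "[a]" a a] by simp

lemma gdist_pos:
  assumes "gwalk F p" "hd p = a" "last p = b" "a \<noteq> b"
  shows "0 < gdist F a b"
proof (rule ccontr)
  assume "\<not> 0 < gdist F a b"
  with gdist_shortest_walk[OF assms(1-3)] obtain q where "hd q = a" "last q = b" "length q = 1"
    by (metis neq0_conv One_nat_def)
  then show False using assms(4) by (cases q) auto
qed

lemma gdist_adjacent: "F a b \<Longrightarrow> a \<noteq> b \<Longrightarrow> gdist F a b = 1"
  using gdist_less_length[of F "[a, b]" a b] gdist_pos[of F "[a, b]" a b] by simp

lemma connected_graph_walk:
  assumes "connected_graph V E" "a \<in> V" "b \<in> V"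
  obtains p where "gwalk E p" "hd p = a" "last p = b"
  using assms unfolding connected_graph_def by blast

lemma connected_graph_gdist_pos:
  "connected_graph V E \<Longrightarrow> a \<in> V \<Longrightarrow> b \<in> V \<Longrightarrow> a \<noteq> b \<Longrightarrow> 0 < gdist E a b"
  by (metis connected_graph_walk gdist_pos)

lemma resolves_commute: "resolves E X u v \<longleftrightarrow> resolves E X v u"
  unfolding resolves_def by metis

lemma metric_dim_le_card: "resolving_set V E X \<Longrightarrow> metric_dim V E \<le> card X"
  unfolding metric_dim_def by (rule Least_le) blast

lemma nonlocal_metric_dim_le_card:
  "nonlocal_resolving_set V E X \<Longrightarrow> nonlocal_metric_dim V E \<le> card X"
  unfolding nonlocal_metric_dim_def by (rule Least_le) blast

lemma nonlocal_metric_dim_attained: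
  assumes "nonlocal_resolving_set V E X"
  obtains Y where "nonlocal_resolving_set V E Y" "card Y = nonlocal_metric_dim V E"
proof -
  have "\<exists>k Y. nonlocal_resolving_set V E Y \<and> card Y = k" using assms by blast
  then have "\<exists>Y. nonlocal_resolving_set V E Y \<and> card Y = nonlocal_metric_dim V E"
    unfolding nonlocal_metric_dim_def by (rule LeastI_ex)
  with that show thesis by blast
qed

definition corona_base :: "'a + 'a \<times> 'b \<Rightarrow> 'a" where
  "corona_base x = (case x of Inl g \<Rightarrow> g | Inr (g, _) \<Rightarrow> g)"

definition corona_depth :: "'a + 'a \<times> 'b \<Rightarrow> nat" where
  "corona_depth x = (case x of Inl _ \<Rightarrow> 0 | Inr _ \<Rightarrow> 1)"

lemma corona_base_simps [simp]: "corona_base (Inl g) = g" "corona_base (Inr (g, h)) = g"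
  by (simp_all add: corona_base_def)

lemma corona_depth_simps [simp]: "corona_depth (Inl g) = 0" "corona_depth (Inr p) = 1"
  by (simp_all add: corona_depth_def)

lemma corona_depth_le_1: "corona_depth x \<le> 1"
  by (cases x) simp_all

lemma finite_corona_verts: "finite VG \<Longrightarrow> finite VH \<Longrightarrow> finite (corona_verts VG VH)"
  by (simp add: corona_verts_def)

lemma corona_base_in_verts: "x \<in> corona_verts VG VH \<Longrightarrow> corona_base x \<in> VG"
  by (auto simp: corona_verts_def)

lemma corona_edges_cases:
  "corona_edges VG EG VH EH x y \<Longrightarrow>
     (\<exists>a b. x = Inl a \<and> y = Inl b \<and> EG a b) \<or> corona_base x = corona_base y"
  by (cases x; cases y) auto

lemma corona_walk_project:
  "gwalk (corona_edges VG EG VH EH) q \<Longrightarrow> corona_base (hd q) \<noteq> corona_base (last q) \<Longrightarrow>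
   \<exists>p. gwalk EG p \<and> hd p = corona_base (hd q) \<and> last p = corona_base (last q) \<and>
       length p + corona_depth (hd q) + corona_depth (last q) \<le> length q"
proof (induction q rule: induct_list012)
  case (3 x y zs)
  let ?w = "last (y # zs)"
  have edge: "corona_edges VG EG VH EH x y"
    and walk: "gwalk (corona_edges VG EG VH EH) (y # zs)"
    using "3.prems"(1) by auto
  show ?case
  proof (cases "corona_base x = corona_base y")
    case True
    with "3.prems"(2) "3.IH"(2) walk obtain p where p: "gwalk EG p" "hd p = corona_base y"
        "last p = corona_base ?w" "length p + corona_depth y + corona_depth ?w \<le> length (y # zs)"
      by auto
    then show ?thesis using True corona_depth_le_1[of x] by (intro exI[of _ p]) auto
  next
    case False
    with corona_edges_cases[OF edge] obtain a b where ab: "x = Inl a" "y = Inl b" "EG a b"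
      by auto
    show ?thesis
    proof (cases "corona_base y = corona_base ?w")
      case False
      with "3.IH"(2) walk obtain p where p: "gwalk EG p" "hd p = corona_base y"
          "last p = corona_base ?w" "length p + corona_depth y + corona_depth ?w \<le> length (y # zs)"
        by auto
      then show ?thesis using ab gwalk_not_Nil[OF p(1)]
        by (intro exI[of _ "a # p"]) (auto simp: gwalk_Cons_iff)
    next
      case True
      \<comment> \<open>the walk returns to the base of \<open>y\<close>, so the one-edge walk \<open>[a, b]\<close> suffices\<close>
      have "corona_depth ?w \<le> length zs"
        using ab corona_depth_le_1[of ?w] by (cases zs) auto
      then show ?thesis using ab True by (intro exI[of _ "[a, b]"]) auto
    qed
  qed
qed simp_all

lemma corona_walk_lift:
  assumes p: "gwalk EG p" "hd p = corona_base u" "last p = corona_base v"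
    and uv: "u \<in> corona_verts VG VH" "v \<in> corona_verts VG VH"
  obtains q where "gwalk (corona_edges VG EG VH EH) q" "hd q = u" "last q = v"
    "length q = length p + corona_depth u + corona_depth v"
proof -
  let ?F = "corona_edges VG EG VH EH"
  have "p \<noteq> []" using p(1) by (rule gwalk_not_Nil)
  have lifted: "gwalk ?F (map Inl p)" by (rule gwalk_map[OF _ p(1)]) simp
  have "\<exists>q. gwalk ?F q \<and> hd q = u \<and> last q = Inl (last p) \<and> length q = length p + corona_depth u"
  proof (cases u)
    case (Inl g)
    then show ?thesis using lifted p \<open>p \<noteq> []\<close> by (intro exI[of _ "map Inl p"]) (auto simp: hd_map last_map)
  next
    case (Inr gh)
    then show ?thesis using lifted p \<open>p \<noteq> []\<close> uv(1)
      by (intro exI[of _ "u # map Inl p"]) (auto simp: gwalk_Cons_iff hd_map last_map corona_verts_def)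
  qed
  then obtain q where q: "gwalk ?F q" "hd q = u" "last q = Inl (last p)"
    "length q = length p + corona_depth u" by blast
  show thesis
  proof (cases v)
    case (Inl g)
    then show thesis using q p(3) by (intro that[of q]) auto
  next
    case (Inr gh)
    have "gwalk ?F (q @ [v])"
      using q p(3) uv(2) Inr by (intro gwalk_snoc) (auto simp: corona_verts_def)
    then show thesis using q gwalk_not_Nil[OF q(1)] Inr by (intro that[of "q @ [v]"]) auto
  qed
qed

lemma connected_graph_corona:
  assumes "connected_graph VG EG"
  shows "connected_graph (corona_verts VG VH) (corona_edges VG EG VH EH)"
  unfolding connected_graph_def
proof (intro conjI ballI)
  show "corona_verts VG VH \<noteq> {}"
    using assms by (auto simp: connected_graph_def corona_verts_def)
next
  fix u v assume uv: "u \<in> corona_verts VG VH" "v \<in> corona_verts VG VH"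
  obtain p where "gwalk EG p" "hd p = corona_base u" "last p = corona_base v"
    using connected_graph_walk[OF assms corona_base_in_verts[OF uv(1)] corona_base_in_verts[OF uv(2)]] .
  from corona_walk_lift[OF this uv] show "\<exists>q. gwalk (corona_edges VG EG VH EH) q \<and> hd q = u \<and> last q = v"
    by metis
qed

lemma gdist_corona_copy:
  assumes "connected_graph VG EG" "g \<in> VG" "h \<in> VH" "x \<in> corona_verts VG VH"
    and "corona_base x \<noteq> g"
  shows "gdist (corona_edges VG EG VH EH) (Inr (g, h)) x = gdist EG g (corona_base x) + 1 + corona_depth x"
proof -
  let ?F = "corona_edges VG EG VH EH"
  have gh: "Inr (g, h) \<in> corona_verts VG VH" using assms(2,3) by (simp add: corona_verts_def)
  obtain p0 where "gwalk EG p0" "hd p0 = g" "last p0 = corona_base x"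
    using connected_graph_walk[OF assms(1,2) corona_base_in_verts[OF assms(4)]] .
  then obtain p where p: "gwalk EG p" "hd p = g" "last p = corona_base x"
      "length p = Suc (gdist EG g (corona_base x))"
    by (rule gdist_shortest_walk)
  obtain q where q: "gwalk ?F q" "hd q = Inr (g, h)" "last q = x"
      "length q = length p + corona_depth (Inr (g, h)) + corona_depth x"
    using corona_walk_lift[OF p(1) _ _ gh assms(4), where EH = EH] p(2,3) by auto
  have upper: "gdist ?F (Inr (g, h)) x \<le> gdist EG g (corona_base x) + 1 + corona_depth x"
    using gdist_less_length[OF q(1-3)] q(4) p(4) by simp
  obtain q' where q': "gwalk ?F q'" "hd q' = Inr (g, h)" "last q' = x"
      "length q' = Suc (gdist ?F (Inr (g, h)) x)"
    using q(1-3) by (rule gdist_shortest_walk)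
  obtain p' where p': "gwalk EG p'" "hd p' = g" "last p' = corona_base x"
      "length p' + 1 + corona_depth x \<le> length q'"
    using corona_walk_project[OF q'(1)] q' assms(5) by fastforce
  have "gdist EG g (corona_base x) < length p'" using gdist_less_length[OF p'(1-3)] .
  with p'(4) q'(4) upper show ?thesis by simp
qed

lemma resolving_set_corona_base_image:
  assumes conn: "connected_graph VG EG" and "h \<in> VH"
    and X: "nonlocal_resolving_set (corona_verts VG VH) (corona_edges VG EG VH EH) X"
  shows "resolving_set VG EG (corona_base ` X)"
  unfolding resolving_set_def
proof (intro conjI ballI impI)
  have XC: "X \<subseteq> corona_verts VG VH" using X by (simp add: nonlocal_resolving_set_def)
  then show "corona_base ` X \<subseteq> VG" by (auto intro: corona_base_in_verts)
  fix g g' assume g: "g \<in> VG" and g': "g' \<in> VG" and "g \<noteq> g'"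
  have "Inr (g, h) \<in> corona_verts VG VH" "Inr (g', h) \<in> corona_verts VG VH"
    using g g' \<open>h \<in> VH\<close> by (auto simp: corona_verts_def)
  with X \<open>g \<noteq> g'\<close> obtain x where x: "x \<in> X"
      "gdist (corona_edges VG EG VH EH) (Inr (g, h)) x \<noteq> gdist (corona_edges VG EG VH EH) (Inr (g', h)) x"
    unfolding nonlocal_resolving_set_def resolves_def by fastforce
  have base: "corona_base x \<in> corona_base ` X" using x(1) by simp
  show "resolves EG (corona_base ` X) g g'"
    unfolding resolves_def
  proof (cases "corona_base x = g \<or> corona_base x = g'")
    case True
    then show "\<exists>y\<in>corona_base ` X. gdist EG g y \<noteq> gdist EG g' y"
      using base connected_graph_gdist_pos[OF conn g g'] connected_graph_gdist_pos[OF conn g' g]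
        \<open>g \<noteq> g'\<close> by (metis gdist_self less_irrefl)
  next
    case False
    then show "\<exists>y\<in>corona_base ` X. gdist EG g y \<noteq> gdist EG g' y"
      using x base XC gdist_corona_copy[OF conn g \<open>h \<in> VH\<close>] gdist_corona_copy[OF conn g' \<open>h \<in> VH\<close>]
      by (metis add_right_cancel subsetD)
  qed
qed

lemma nonlocal_resolving_set_corona_base_verts:
  assumes conn: "connected_graph VG EG"
    and complete: "\<And>h h'. h \<in> VH \<Longrightarrow> h' \<in> VH \<Longrightarrow> h \<noteq> h' \<Longrightarrow> EH h h'"
  shows "nonlocal_resolving_set (corona_verts VG VH) (corona_edges VG EG VH EH) (Inl ` VG)"
  unfolding nonlocal_resolving_set_def
proof (intro conjI ballI impI)
  let ?C = "corona_verts VG VH" and ?F = "corona_edges VG EG VH EH"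
  show "Inl ` VG \<subseteq> ?C" by (auto simp: corona_verts_def)
  have landmark: "resolves ?F (Inl ` VG) u v"
    if "u \<in> Inl ` VG" "v \<in> ?C" "u \<noteq> v" for u v
    using that connected_graph_gdist_pos[OF connected_graph_corona[OF conn], where a = v and b = u]
    unfolding resolves_def by (metis gdist_self less_irrefl subsetD \<open>Inl ` VG \<subseteq> ?C\<close>)
  fix u v assume u: "u \<in> ?C" and v: "v \<in> ?C" and uv: "u \<noteq> v \<and> \<not> ?F u v"
  show "resolves ?F (Inl ` VG) u v"
  proof (cases "u \<in> Inl ` VG \<or> v \<in> Inl ` VG")
    case True
    then show ?thesis using landmark u v uv resolves_commute by metis
  next
    case False
    then obtain g h g' h' where gh: "u = Inr (g, h)" "g \<in> VG" "h \<in> VH"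
        and gh': "v = Inr (g', h')" "g' \<in> VG" "h' \<in> VH"
      using u v by (auto simp: corona_verts_def)
    have "g \<noteq> g'" using uv gh gh' complete by auto
    have "gdist ?F u (Inl g') = gdist EG g g' + 1"
      using gdist_corona_copy[OF conn gh(2,3), of "Inl g'"] gh gh' \<open>g \<noteq> g'\<close>
      by (simp add: corona_verts_def)
    moreover have "gdist ?F v (Inl g') = 1" using gh' by (intro gdist_adjacent) auto
    moreover have "0 < gdist EG g g'" using connected_graph_gdist_pos[OF conn gh(2) gh'(2) \<open>g \<noteq> g'\<close>] .
    ultimately show ?thesis unfolding resolves_def using gh'(2) by (intro bexI[of _ "Inl g'"]) auto
  qed
qed

theorem theorem3p3:
  fixes V :: "'a set" and E :: "'a \<Rightarrow> 'a \<Rightarrow> bool" and n :: nat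
  assumes "simple_graph V E" and "connected_graph V E" and "n \<ge> 1"
  shows "metric_dim V E
           \<le> nonlocal_metric_dim (corona_verts V (K_verts n)) (corona_edges V E (K_verts n) (K_edges n))
       \<and> nonlocal_metric_dim (corona_verts V (K_verts n)) (corona_edges V E (K_verts n) (K_edges n))
           \<le> card V"
proof -
  let ?C = "corona_verts V (K_verts n)" and ?F = "corona_edges V E (K_verts n) (K_edges n)"
  have finite: "finite ?C"
    using assms(1) by (intro finite_corona_verts) (auto simp: simple_graph_def K_verts_def)
  have base_set: "nonlocal_resolving_set ?C ?F (Inl ` V)"
    using assms(2) by (rule nonlocal_resolving_set_corona_base_verts) (auto simp: K_verts_def K_edges_def)
  then obtain X where X: "nonlocal_resolving_set ?C ?F X" "card X = nonlocal_metric_dim ?C ?F"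
    by (rule nonlocal_metric_dim_attained)
  have "finite X"
    using X(1) finite by (auto simp: nonlocal_resolving_set_def intro: finite_subset)
  have "metric_dim V E \<le> card (corona_base ` X)"
    using assms(2,3) X(1) by (intro metric_dim_le_card resolving_set_corona_base_image[where h = 0])
      (auto simp: K_verts_def)
  also have "\<dots> \<le> nonlocal_metric_dim ?C ?F"
    using card_image_le[OF \<open>finite X\<close>] X(2) by simp
  finally have lower: "metric_dim V E \<le> nonlocal_metric_dim ?C ?F" .
  have "nonlocal_metric_dim ?C ?F \<le> card (Inl ` V :: ('a + 'a \<times> nat) set)"
    using base_set by (rule nonlocal_metric_dim_le_card)
  with lower show ?thesis by (simp add: card_image)
qed

end
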